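(* For $c\ge 2.1$ and $\mu\in[0,1/2]$ one has $d_{\mu,c}\le\frac{3-2\mu}{5}$. In particular $2|z|^2\le 3/5$ for all $(z,w)\in\Sigma_{\mu,c}$.
   Context: Restricted three-body problem with Jacobi Hamiltonian $H(q,p)=\tfrac12|p|^2+q_1p_2-q_2p_1-\frac{1-\mu}{|q+(\mu,0)|}-\frac{\mu}{|q-(1-\mu,0)|}$ and effective potential $U(q)=-\tfrac12|q|^2-\frac{1-\mu}{|q+(\mu,0)|}-\frac{\mu}{|q-(1-\mu,0)|}$; the Hill's region at level $-c$ is $\{q:U(q)\le -c\}$. $d_{\mu,c}$ denotes the maximal distance from $(-\mu,0)$ to a point of the connected component of the Hill's region whose closure contains $(-\mu,0)$ (this maximum is attained on the $q_1$-axis at a point $(x_{\mu,c},0)$ with $x_{\mu,c}\in(-\mu,1-\mu)$, $d_{\mu,c}=x_{\mu,c}+\mu$). Levi-Civita regularization: $q+\mu=2z^2$, $p=w/\bar z$ (complex notation); $\Sigma_{\mu,c}$ is the compact component of $K_{\mu,c}^{-1}(0)$ containing $\{z=0\}$, where $K_{\mu,c}=\tfrac12|w|^2+c|z|^2-\tfrac{1-\mu}{2}+2|z|^2(z_1w_2-z_2w_1)-\mu(z_1w_2+z_2w_1)-\frac{\mu|z|^2}{|2z^2-1|}$. *)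

theory Defs
  imports "HOL-Analysis.Analysis"
begin

text \<open>Positions q = (q1,q2) in the plane are represented as complex numbers q = q1 + i q2.
  The primaries sit at -mu and 1 - mu.\<close>

definition effU :: "real \<Rightarrow> complex \<Rightarrow> real" where
  "effU mu q = - ((cmod q)^2 / 2) - (1 - mu) / cmod (q + complex_of_real mu)
                 - mu / cmod (q - complex_of_real (1 - mu))"

text \<open>Hill's region at level -c (collision points, where U is -infinity / undefined, removed).\<close>
definition hill :: "real \<Rightarrow> real \<Rightarrow> complex set" where
  "hill mu c = {q. q \<noteq> complex_of_real (- mu)
                  \<and> (mu \<noteq> 0 \<longrightarrow> q \<noteq> complex_of_real (1 - mu))
                  \<and> effU mu q \<le> - c}"

definition hill_comp :: "real \<Rightarrow> real \<Rightarrow> complex set" where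
  "hill_comp mu c = {q \<in> hill mu c.
      complex_of_real (- mu) \<in> closure (connected_component_set (hill mu c) q)}"

definition dmc :: "real \<Rightarrow> real \<Rightarrow> real" where
  "dmc mu c = Sup ((\<lambda>q. dist (complex_of_real (- mu)) q) ` hill_comp mu c)"

text \<open>Levi-Civita regularized Hamiltonian K_{mu,c}(z,w), z = z1 + i z2, w = w1 + i w2.\<close>
definition Kreg :: "real \<Rightarrow> real \<Rightarrow> complex \<Rightarrow> complex \<Rightarrow> real" where
  "Kreg mu c z w = (cmod w)^2 / 2 + c * (cmod z)^2 - (1 - mu) / 2
     + 2 * (cmod z)^2 * (Re z * Im w - Im z * Re w)
     - mu * (Re z * Im w + Im z * Re w)
     - mu * (cmod z)^2 / cmod (2 * z^2 - 1)"

definition Kzero :: "real \<Rightarrow> real \<Rightarrow> (complex \<times> complex) set" where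
  "Kzero mu c = {(z, w). (mu \<noteq> 0 \<longrightarrow> 2 * z^2 \<noteq> 1) \<and> Kreg mu c z w = 0}"

definition Sigma_mc :: "real \<Rightarrow> real \<Rightarrow> (complex \<times> complex) set" where
  "Sigma_mc mu c = {p \<in> Kzero mu c. \<exists>w. (0, w) \<in> Kzero mu c
                       \<and> p \<in> connected_component_set (Kzero mu c) (0, w)}"

end

theory Submission
  imports Defs
begin

(*
  With the convex function h(x) = x^2/2 + 1/x on x > 0, the effective potential splits as
  U(q) = mu(1-mu)/2 - (1-mu) h(|q+mu|) - mu h(|q-1+mu|).  On the circle |q+mu| = r with
  r = (3-2mu)/5 the distance to the second primary ranges over [1-r, 1+r], so by convexity
  U is smallest at one of the two points of the circle on the q1-axis, where a direct
  computation gives U > -2.1 >= -c.  Hence the circle misses the Hill's region, and the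
  connected component accumulating at -mu stays strictly inside it.

  Completing the square in w writes K(z,w) as |z|^2 (c + U(2z^2 - mu)) plus a square, so the
  Levi-Civita map sends K^{-1}(0) \ {z = 0} into the Hill's region; since |2z^2 - mu + mu| =
  2|z|^2, the same connectedness argument confines Sigma to 2|z|^2 < r <= 3/5.
*)

text \<open>Minus the effective potential of the rotating Kepler problem (\<open>mu = 0\<close>).\<close>

definition rot_kepler :: "real \<Rightarrow> real" where
  "rot_kepler x = x^2 / 2 + 1 / x"

lemma rot_kepler_le_max:
  assumes "0 < lo" "lo \<le> a" "a \<le> hi"
  shows "rot_kepler a \<le> max (rot_kepler lo) (rot_kepler hi)"
proof -
  have sq: "convex_on {lo..hi} (\<lambda>x::real. x^2)"
    by (rule convex_on_subset[OF convex_power_even]) auto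
  have "convex_on {lo..hi} (\<lambda>x. (1/2) * x^2)"
    by (rule convex_on_cmul[OF _ sq]) simp
  moreover have "convex_on {lo..hi} inverse"
    using assms(1) by (intro convex_on_inverse) auto
  ultimately have "convex_on {lo..hi} (\<lambda>x. (1/2) * x^2 + inverse x)"
    by (rule convex_on_add)
  then have "convex_on {lo..hi} rot_kepler"
    by (simp add: rot_kepler_def[abs_def] inverse_eq_divide)
  then show ?thesis
    using assms by (intro convex_on_le_max) auto
qed

text \<open>Stewart's theorem: the origin is the centre of mass of the primaries.\<close>

lemma norm_sq_eq_weighted_distances:
  fixes q :: complex and m :: real
  shows "(cmod q)^2 = (1 - m) * (cmod (q + of_real m))^2
                      + m * (cmod (q - of_real (1 - m)))^2 - m * (1 - m)"
  unfolding cmod_power2 by (simp add: power2_eq_square algebra_simps)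

lemma effU_eq_rot_kepler:
  "effU mu q = mu * (1 - mu) / 2 - (1 - mu) * rot_kepler (cmod (q + of_real mu))
                                  - mu * rot_kepler (cmod (q - of_real (1 - mu)))"
  unfolding effU_def rot_kepler_def norm_sq_eq_weighted_distances[of q mu]
  by (simp add: field_simps)

text \<open>The numerators of \<open>21/10 + effU\<close> at the two axis points of the circle, after clearing
  denominators; in the variable \<open>t = 1/2 - m\<close> their positivity on \<open>[0, 1/2]\<close> is evident.\<close>

lemma inner_quartic_pos:
  fixes m :: real assumes "0 \<le> m" "m \<le> 1/2"
  shows "0 < 76 - 306*m + 406*m^2 - 266*m^3 + 196*m^4"
proof -
  define t where "t = 1/2 - m"
  have t: "0 \<le> t" "t \<le> 1/2" using assms t_def by auto
  have "t^3 \<le> (1/2) * t^2"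
    using mult_right_mono[OF t(2), of "t^2"] by (simp add: power2_eq_square power3_eq_cube)
  moreover have "0 \<le> t^4" "0 \<le> t^2" using t by auto
  ultimately have "0 < 7/2 + 3/2*t + 301*t^2 - 126*t^3 + 196*t^4" using t by linarith
  also have "\<dots> = 76 - 306*m + 406*m^2 - 266*m^3 + 196*m^4"
    unfolding t_def by (simp add: field_simps power2_eq_square power3_eq_cube power4_eq_xxxx)
  finally show ?thesis .
qed

lemma outer_quartic_pos:
  fixes m :: real assumes "0 \<le> m" "m \<le> 1/2"
  shows "0 < 304 - 794*m + 564*m^2 + 126*m^3 - 36*m^4"
proof -
  define t where "t = 1/2 - m"
  have t: "0 \<le> t" "t \<le> 1/2" using assms t_def by auto
  have "t^3 \<le> (1/2) * t^2"
    using mult_right_mono[OF t(2), of "t^2"] by (simp add: power2_eq_square power3_eq_cube)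
  moreover have "t^4 \<le> (1/4) * t^2"
    using mult_right_mono[OF mult_mono[OF t(2) t(2)], of "t^2"] t
    by (simp add: power2_eq_square power4_eq_xxxx)
  moreover have "0 \<le> t^2" using t by auto
  ultimately have "0 < 123/2 + 307/2*t + 699*t^2 - 54*t^3 - 36*t^4" using t by linarith
  also have "\<dots> = 304 - 794*m + 564*m^2 + 126*m^3 - 36*m^4"
    unfolding t_def by (simp add: field_simps power2_eq_square power3_eq_cube power4_eq_xxxx)
  finally show ?thesis .
qed

lemma effU_inner_axis_point_gt:
  fixes m :: real assumes m: "0 \<le> m" "m \<le> 1/2"
  defines "r \<equiv> (3 - 2*m) / 5"
  shows "-21/10 < effU m (of_real (r - m))"
proof -
  have r: "0 < r" "r < 1" using m r_def by auto
  have d: "0 < 3 - 2*m" "0 < 2 + 2*m" using m by auto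
  have "effU m (of_real (r - m)) = - ((r - m)^2/2 + (1 - m)/r + m/(1 - r))"
    unfolding effU_def using r by (simp flip: of_real_add of_real_diff)
  moreover have "(r - m)^2/2 + (1 - m)/r + m/(1 - r)
        = ((3-7*m)^2*(3-2*m)*(2+2*m) + 250*(1-m)*(2+2*m) + 250*m*(3-2*m))
          / (50*(3-2*m)*(2+2*m))"
    unfolding r_def using d by (simp add: field_simps)
  moreover have "((3-7*m)^2*(3-2*m)*(2+2*m) + 250*(1-m)*(2+2*m) + 250*m*(3-2*m))
                 < 21/10 * (50*(3-2*m)*(2+2*m))"
    using inner_quartic_pos[OF m]
    by (simp add: algebra_simps power2_eq_square power3_eq_cube power4_eq_xxxx)
  ultimately show ?thesis
    using d by (simp add: divide_less_eq)
qed

lemma effU_outer_axis_point_gt: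
  fixes m :: real assumes m: "0 \<le> m" "m \<le> 1/2"
  defines "r \<equiv> (3 - 2*m) / 5"
  shows "-21/10 < effU m (of_real (- r - m))"
proof -
  have r: "0 < r" "r < 1" using m r_def by auto
  have d: "0 < 3 - 2*m" "0 < 8 - 2*m" using m by auto
  have "effU m (of_real (- r - m)) = - ((r + m)^2/2 + (1 - m)/r + m/(1 + r))"
    unfolding effU_def using r
    by (simp flip: of_real_add of_real_diff, simp add: power2_eq_square algebra_simps)
  moreover have "(r + m)^2/2 + (1 - m)/r + m/(1 + r)
        = ((3+3*m)^2*(3-2*m)*(8-2*m) + 250*(1-m)*(8-2*m) + 250*m*(3-2*m))
          / (50*(3-2*m)*(8-2*m))"
    unfolding r_def using d by (simp add: field_simps)
  moreover have "((3+3*m)^2*(3-2*m)*(8-2*m) + 250*(1-m)*(8-2*m) + 250*m*(3-2*m))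
                 < 21/10 * (50*(3-2*m)*(8-2*m))"
    using outer_quartic_pos[OF m]
    by (simp add: algebra_simps power2_eq_square power3_eq_cube power4_eq_xxxx)
  ultimately show ?thesis
    using d by (simp add: divide_less_eq)
qed

lemma effU_gt_on_circle:
  fixes m :: real and q :: complex
  assumes m: "0 \<le> m" "m \<le> 1/2" and q: "cmod (q + of_real m) = (3 - 2*m) / 5"
  shows "-21/10 < effU m q"
proof -
  define r where "r = (3 - 2*m) / 5"
  define a where "a = cmod (q - of_real (1 - m))"
  have r: "0 < r" "r < 1" using m r_def by auto
  have shift: "q - of_real (1 - m) = (q + of_real m) - 1" by simp
  have a: "1 - r \<le> a" "a \<le> 1 + r"
    using norm_triangle_ineq2[of 1 "q + of_real m"] norm_triangle_ineq4[of "q + of_real m" 1] q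
    unfolding a_def r_def shift by (simp_all add: norm_minus_commute)
  have "m * rot_kepler a \<le> m * max (rot_kepler (1 - r)) (rot_kepler (1 + r))"
    using a r m by (intro mult_left_mono rot_kepler_le_max) auto
  moreover have "effU m q = m*(1 - m)/2 - (1 - m) * rot_kepler r - m * rot_kepler a"
    using effU_eq_rot_kepler[of m q] q unfolding a_def r_def by simp
  moreover have "effU m (of_real (r - m))
                 = m*(1 - m)/2 - (1 - m) * rot_kepler r - m * rot_kepler (1 - r)"
    using effU_eq_rot_kepler[of m "of_real (r - m)"] r by (simp flip: of_real_add of_real_diff)
  moreover have "effU m (of_real (- r - m))
                 = m*(1 - m)/2 - (1 - m) * rot_kepler r - m * rot_kepler (1 + r)"
    using effU_eq_rot_kepler[of m "of_real (- r - m)"] r by (simp flip: of_real_add of_real_diff)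
  moreover note effU_inner_axis_point_gt[OF m, folded r_def]
    effU_outer_axis_point_gt[OF m, folded r_def]
  ultimately show ?thesis by (simp add: max_def split: if_splits)
qed

lemma hill_avoids_circle:
  assumes "21/10 \<le> c" "0 \<le> mu" "mu \<le> 1/2" "q \<in> hill mu c"
  shows "cmod (q + of_real mu) \<noteq> (3 - 2*mu) / 5"
  using effU_gt_on_circle[of mu q] assms unfolding hill_def by force

lemma Kreg_eq_completed_square:
  fixes z w :: complex
  assumes "z \<noteq> 0"
  shows "Kreg mu c z w = (cmod z)^2 * (c + effU mu (2*z^2 - of_real mu))
                         + (cmod (w + \<i> * cnj z * (2*z^2 - of_real mu)))^2 / 2"
proof -
  have expand_square: "(cmod (w + \<i> * cnj z * (2*z^2 - of_real mu)))^2
     = (cmod w)^2 + 2*(2*(cmod z)^2*(Re z * Im w - Im z * Re w) - mu*(Re z * Im w + Im z * Re w))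
       + (cmod z)^2 * (cmod (2*z^2 - of_real mu))^2"
    unfolding cmod_power2 by (simp add: power2_eq_square algebra_simps)
  have dist_first: "cmod (2*z^2 - of_real mu + of_real mu) = 2*(cmod z)^2"
    by (simp add: norm_mult norm_power)
  have shift_second: "2*z^2 - of_real mu - of_real (1 - mu) = 2*z^2 - 1" by simp
  show ?thesis
    unfolding Kreg_def effU_def expand_square dist_first shift_second
    using assms by (simp add: field_simps power2_eq_square)
qed

lemma Kzero_in_hill:
  assumes "(z, w) \<in> Kzero mu c" "z \<noteq> 0"
  shows "2*z^2 - of_real mu \<in> hill mu c"
proof -
  have "Kreg mu c z w = 0" and collision: "mu \<noteq> 0 \<longrightarrow> 2*z^2 \<noteq> 1"
    using assms(1) unfolding Kzero_def by auto
  then have "(cmod z)^2 * (c + effU mu (2*z^2 - of_real mu)) \<le> 0"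
    unfolding Kreg_eq_completed_square[OF assms(2)]
    by (smt (verit) zero_le_power2 divide_nonneg_pos)
  then have "effU mu (2*z^2 - of_real mu) \<le> - c"
    using assms(2) by (simp add: mult_le_0_iff)
  then show ?thesis
    unfolding hill_def using assms(2) collision by auto
qed

lemma connected_stays_below_level:
  fixes f :: "'a::topological_space \<Rightarrow> real"
  assumes "connected S" "continuous_on UNIV f" "x \<in> closure S" "f x < r"
    and avoids: "\<And>y. y \<in> S \<Longrightarrow> f y \<noteq> r" and "y \<in> S"
  shows "f y < r"
proof (rule ccontr)
  assume "\<not> f y < r"
  then have above: "r < f y" using avoids \<open>y \<in> S\<close> by force
  have conn: "connected (f ` S)"
    using assms(1) continuous_on_subset[OF assms(2)] by (intro connected_continuous_image) auto
  have "r < f v" if "v \<in> S" for v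
  proof (rule ccontr)
    assume "\<not> r < f v"
    then have "r \<in> f ` S"
      using connectedD_interval[OF conn, of "f v" "f y" r] that \<open>y \<in> S\<close> above by force
    then show False using avoids by blast
  qed
  then have "S \<subseteq> {v. r \<le> f v}" by force
  then have "closure S \<subseteq> {v. r \<le> f v}"
    by (rule closure_minimal) (intro closed_Collect_le continuous_on_const assms(2))
  then show False using assms(3,4) by force
qed

lemma punctured_ball_subset_hill:
  assumes "0 \<le> mu" "mu < 1" "1 - mu < c"
  shows "ball (of_real (- mu)) ((1 - mu) / c) - {of_real (- mu)} \<subseteq> hill mu c"
proof
  fix q :: complex assume q: "q \<in> ball (of_real (- mu)) ((1 - mu) / c) - {of_real (- mu)}"
  have c: "0 < c" using assms by linarith
  have dist: "cmod (q + of_real mu) < (1 - mu) / c"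
    using q by (simp add: dist_norm norm_minus_commute add.commute)
  also have "\<dots> < 1" using assms c by simp
  finally have not_second: "q \<noteq> of_real (1 - mu)" by auto
  have "q + of_real mu \<noteq> 0" using q by (auto simp: add_eq_0_iff2)
  then have "c \<le> (1 - mu) / cmod (q + of_real mu)"
    using dist c by (simp add: le_divide_eq pos_less_divide_eq mult.commute)
  moreover have "0 \<le> mu / cmod (q - of_real (1 - mu))" "0 \<le> (cmod q)^2 / 2"
    using assms by simp_all
  ultimately have "effU mu q \<le> - c" unfolding effU_def by linarith
  then show "q \<in> hill mu c" unfolding hill_def using q not_second by simp
qed

lemma hill_comp_nonempty:
  assumes "0 \<le> mu" "mu < 1" "1 - mu < c"
  shows "hill_comp mu c \<noteq> {}"
proof -
  define D where "D = ball (complex_of_real (- mu)) ((1 - mu) / c) - {of_real (- mu)}"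
  have "0 < (1 - mu) / c" using assms by simp
  then have "of_real (- mu) \<in> closure D"
    unfolding D_def by (simp flip: islimpt_in_closure add: islimpt_ball)
  then obtain q where q: "q \<in> D" by fastforce
  have "D \<subseteq> connected_component_set (hill mu c) q"
    using q punctured_ball_subset_hill[OF assms]
    by (intro connected_component_maximal) (auto simp: D_def connected_punctured_ball)
  then have "of_real (- mu) \<in> closure (connected_component_set (hill mu c) q)"
    using closure_mono \<open>of_real (- mu) \<in> closure D\<close> by blast
  then have "q \<in> hill_comp mu c"
    using q punctured_ball_subset_hill[OF assms] unfolding hill_comp_def D_def by blast
  then show ?thesis by blast
qed

lemma hill_comp_inside_circle:
  assumes "21/10 \<le> c" "0 \<le> mu" "mu \<le> 1/2" "q \<in> hill_comp mu c"
  shows "dist (of_real (- mu)) q < (3 - 2*mu) / 5"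
proof -
  define S where "S = connected_component_set (hill mu c) q"
  have "cmod (q + of_real mu) < (3 - 2*mu) / 5"
  proof (rule connected_stays_below_level[where S = S and f = "\<lambda>x. cmod (x + of_real mu)"])
    show "of_real (- mu) \<in> closure S" using assms(4) unfolding S_def hill_comp_def by simp
    show "y \<in> S \<Longrightarrow> cmod (y + of_real mu) \<noteq> (3 - 2*mu) / 5" for y
      using hill_avoids_circle[OF assms(1-3)] connected_component_subset unfolding S_def by blast
    show "q \<in> S" using assms(4) unfolding S_def hill_comp_def by simp
  qed (use assms in \<open>auto simp: S_def intro!: continuous_intros\<close>)
  then show ?thesis by (simp add: dist_norm norm_minus_commute add.commute)
qed

lemma dmc_le:
  assumes "21/10 \<le> c" "0 \<le> mu" "mu \<le> 1/2"
  shows "dmc mu c \<le> (3 - 2*mu) / 5"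
  unfolding dmc_def
proof (rule cSup_least)
  show "(\<lambda>q. dist (of_real (- mu)) q) ` hill_comp mu c \<noteq> {}"
    using hill_comp_nonempty assms by simp
qed (use hill_comp_inside_circle[OF assms] in \<open>auto intro: less_imp_le\<close>)

lemma Sigma_mc_inside_circle:
  assumes "21/10 \<le> c" "0 \<le> mu" "mu \<le> 1/2" "(z, w) \<in> Sigma_mc mu c"
  shows "2 * (cmod z)^2 < (3 - 2*mu) / 5"
proof -
  obtain w0 where w0: "(0, w0) \<in> Kzero mu c"
    and zw: "(z, w) \<in> connected_component_set (Kzero mu c) (0, w0)"
    using assms(4) unfolding Sigma_mc_def by blast
  define S where "S = connected_component_set (Kzero mu c) (0, w0)"
  have "2 * (cmod (fst (z, w)))^2 < (3 - 2*mu) / 5"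
  proof (rule connected_stays_below_level[where S = S and f = "\<lambda>p. 2 * (cmod (fst p))^2"])
    show "(0, w0) \<in> closure S" using w0 closure_subset unfolding S_def by fastforce
    show "2 * (cmod (fst p))^2 \<noteq> (3 - 2*mu) / 5" if "p \<in> S" for p
    proof
      assume p: "2 * (cmod (fst p))^2 = (3 - 2*mu) / 5"
      have "(fst p, snd p) \<in> Kzero mu c"
        using that connected_component_subset unfolding S_def by fastforce
      moreover have "fst p \<noteq> 0" using p assms by auto
      ultimately have "2 * (fst p)^2 - of_real mu \<in> hill mu c" by (rule Kzero_in_hill)
      moreover have "cmod (2 * (fst p)^2 - of_real mu + of_real mu) = (3 - 2*mu) / 5"
        using p by (simp add: norm_mult norm_power)
      ultimately show False using hill_avoids_circle[OF assms(1-3)] by blast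
    qed
  qed (use assms zw in \<open>auto simp: S_def intro!: continuous_intros\<close>)
  then show ?thesis by simp
qed

theorem lemma4p1:
  fixes mu c :: real
  assumes "c \<ge> 2.1" and "0 \<le> mu" and "mu \<le> 1/2"
  shows "dmc mu c \<le> (3 - 2 * mu) / 5
         \<and> (\<forall>z w. (z, w) \<in> Sigma_mc mu c \<longrightarrow> 2 * (cmod z)^2 \<le> 3 / 5)"
proof -
  have c: "21/10 \<le> c" using assms(1) by simp
  have "(3 - 2 * mu) / 5 \<le> 3/5" using assms(2) by simp
  then show ?thesis
    using dmc_le[OF c assms(2,3)] Sigma_mc_inside_circle[OF c assms(2,3)] by force
qed

end
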